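(* Under the hypotheses of the infinite horizon dynamic programming lemma (time-invariant UMCO channel on finite alphabets; there exist $V:\mathbb B\to\mathbb R$ and $J^*\in\mathbb R$ with $\lim_{t\to\infty}(\widetilde V_t(b)-tJ^* )=V(b)$ for all $b$, and $(V,J^* )$ solves the average-reward dynamic programming equation), a time-invariant channel input distribution $\{\pi^\infty(a_0|b_{-1}):b_{-1}\in\mathbb B\}$ achieves the supremum in the dynamic programming equation if and only if there exist $\{V(b_{-1}):b_{-1}\in\mathbb B\}$ such that $$J^*+V(b_{-1})=\sum_{b_0}\Big(\log\frac{\mathbf P(b_0|b_{-1},a_0)}{\mathbf P^{\pi^\infty}(b_0|b_{-1})}+V(b_0)\Big)\mathbf P(b_0|b_{-1},a_0)\quad\forall a_0\text{ with }\pi^\infty(a_0|b_{-1})\ne0,$$ $$J^*+V(b_{-1})\le\sum_{b_0}\Big(\log\frac{\mathbf P(b_0|b_{-1},a_0)}{\mathbf P^{\pi^\infty}(b_0|b_{-1})}+V(b_0)\Big)\mathbf P(b_0|b_{-1},a_0)\quad\forall a_0\text{ with }\pi^\infty(a_0|b_{-1})=0.$$ Moreover, $V$ is then the relative value function solving the dynamic programming equation.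
   Context: Time-invariant UMCO channel $\mathbf P(b_i|b_{i-1},a_i)$ on finite alphabets; $\mathbf P^{\pi}(b_0|b_{-1})=\sum_a\mathbf P(b_0|b_{-1},a)\pi(a|b_{-1})$. $\widetilde V_0\equiv0$, $\widetilde V_t(b_{-1})=\sup_{\pi(\cdot|b_{-1})}\sum_{a_0}\{\sum_{b_0}\log\frac{\mathbf P(b_0|b_{-1},a_0)}{\mathbf P^\pi(b_0|b_{-1})}\mathbf P(b_0|b_{-1},a_0)+\sum_{b_0}\widetilde V_{t-1}(b_0)\mathbf P(b_0|b_{-1},a_0)\}\pi(a_0|b_{-1})$. The dynamic programming equation is $J^*+V(b_{-1})=\sup_{\pi(\cdot|b_{-1})}\sum_{a_0}\{\sum_{b_0}\log\frac{\mathbf P(b_0|b_{-1},a_0)}{\mathbf P^\pi(b_0|b_{-1})}\mathbf P(b_0|b_{-1},a_0)+\sum_{b_0}V(b_0)\mathbf P(b_0|b_{-1},a_0)\}\pi(a_0|b_{-1})$. *)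

theory Defs
  imports "HOL-Analysis.Analysis"
begin

text \<open>Channel: P b0 bprev a = P(b0 | b_{-1}=bprev, a_0 = a), on finite alphabets
  'a (inputs) and 'b (outputs). A conditional input distribution at bprev is q :: 'a => real.\<close>

definition is_dist :: "('x::finite \<Rightarrow> real) \<Rightarrow> bool" where
  "is_dist q \<longleftrightarrow> (\<forall>x. q x \<ge> 0) \<and> (\<Sum>x\<in>UNIV. q x) = 1"

definition UMCO_channel :: "('b::finite \<Rightarrow> 'b \<Rightarrow> 'a::finite \<Rightarrow> real) \<Rightarrow> bool" where
  "UMCO_channel P \<longleftrightarrow> (\<forall>bprev a. is_dist (\<lambda>b0. P b0 bprev a))"

definition Ppi :: "('b::finite \<Rightarrow> 'b \<Rightarrow> 'a::finite \<Rightarrow> real) \<Rightarrow> 'b \<Rightarrow> ('a \<Rightarrow> real) \<Rightarrow> 'b \<Rightarrow> real" where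
  "Ppi P bprev q b0 = (\<Sum>a\<in>UNIV. P b0 bprev a * q a)"

definition input_term :: "('b::finite \<Rightarrow> 'b \<Rightarrow> 'a::finite \<Rightarrow> real) \<Rightarrow> ('b \<Rightarrow> real) \<Rightarrow> 'b \<Rightarrow> ('a \<Rightarrow> real) \<Rightarrow> 'a \<Rightarrow> real" where
  "input_term P W bprev q a =
     (\<Sum>b0\<in>UNIV. (ln (P b0 bprev a / Ppi P bprev q b0) + W b0) * P b0 bprev a)"

definition stage_obj :: "('b::finite \<Rightarrow> 'b \<Rightarrow> 'a::finite \<Rightarrow> real) \<Rightarrow> ('b \<Rightarrow> real) \<Rightarrow> 'b \<Rightarrow> ('a \<Rightarrow> real) \<Rightarrow> real" where
  "stage_obj P W bprev q = (\<Sum>a\<in>UNIV. input_term P W bprev q a * q a)"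

definition dp_sup :: "('b::finite \<Rightarrow> 'b \<Rightarrow> 'a::finite \<Rightarrow> real) \<Rightarrow> ('b \<Rightarrow> real) \<Rightarrow> 'b \<Rightarrow> real" where
  "dp_sup P W bprev = (SUP q\<in>{q. is_dist q}. stage_obj P W bprev q)"

fun Vt :: "('b::finite \<Rightarrow> 'b \<Rightarrow> 'a::finite \<Rightarrow> real) \<Rightarrow> nat \<Rightarrow> 'b \<Rightarrow> real" where
  "Vt P 0 = (\<lambda>b. 0)"
| "Vt P (Suc t) = (\<lambda>b. dp_sup P (Vt P t) b)"

definition DP_eq :: "('b::finite \<Rightarrow> 'b \<Rightarrow> 'a::finite \<Rightarrow> real) \<Rightarrow> real \<Rightarrow> ('b \<Rightarrow> real) \<Rightarrow> bool" where
  "DP_eq P J V \<longleftrightarrow> (\<forall>b. J + V b = dp_sup P V b)"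

definition achieves_sup :: "('b::finite \<Rightarrow> 'b \<Rightarrow> 'a::finite \<Rightarrow> real) \<Rightarrow> ('b \<Rightarrow> real) \<Rightarrow> ('b \<Rightarrow> 'a \<Rightarrow> real) \<Rightarrow> bool" where
  "achieves_sup P V pol \<longleftrightarrow> (\<forall>b. is_dist (pol b) \<and> stage_obj P V b (pol b) = dp_sup P V b)"

text \<open>For inputs with pi(a|b)=0 the right-hand side is
  +infinity (extended-real convention log(p/0)=+infinity for p>0) unless every output
  reachable from (b,a) has positive P^pi-probability; the inequality J+V <= +infinity
  fails, so that case is made explicit.\<close>
definition KKT_cond :: "('b::finite \<Rightarrow> 'b \<Rightarrow> 'a::finite \<Rightarrow> real) \<Rightarrow> real \<Rightarrow> ('b \<Rightarrow> real) \<Rightarrow> ('b \<Rightarrow> 'a \<Rightarrow> real) \<Rightarrow> bool" where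
  "KKT_cond P J V pol \<longleftrightarrow>
     (\<forall>b a. (pol b a \<noteq> 0 \<longrightarrow> J + V b = input_term P V b (pol b) a) \<and>
            (pol b a = 0 \<longrightarrow> (\<forall>b0. P b0 b a > 0 \<longrightarrow> Ppi P b (pol b) b0 > 0) \<and>
                            J + V b \<ge> input_term P V b (pol b) a))"

end

theory Submission
  imports Defs
begin

text \<open>For a fixed previous output the objective is a linear function of the input distribution
  plus the entropy of the induced output distribution. For input distributions \<open>p, q\<close> such that
  every output reachable under \<open>q\<close> has positive \<open>P\<^sup>p\<close>-probability,
  \<open>stage_obj q = \<Sum>\<^sub>a q(a) T\<^sub>p(a) - D(P\<^sup>q \<parallel> P\<^sup>p)\<close>,
  where \<open>T\<^sub>p(a)\<close> is the per-input term. Since \<open>D \<ge> 0\<close>, the two conditions of the theorem make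
  \<open>p\<close> attain \<open>J + W(b)\<close> while no \<open>q\<close> exceeds it. Conversely, let \<open>p\<close> be optimal and mix in
  weight \<open>e\<close> of the point mass at an input \<open>a\<close>. If some output reachable from \<open>a\<close> had
  \<open>P\<^sup>p\<close>-probability zero, the output entropy would grow like \<open>-e ln e\<close>, beating every linear
  loss; otherwise the identity and \<open>D \<le> \<chi>\<^sup>2 = O(e\<^sup>2)\<close> give \<open>T\<^sub>p(a) \<le> stage_obj p\<close>,
  with equality on the support of \<open>p\<close> because the \<open>p\<close>-average of \<open>T\<^sub>p\<close> is \<open>stage_obj p\<close>.\<close>

definition mix :: "real \<Rightarrow> ('x \<Rightarrow> real) \<Rightarrow> ('x \<Rightarrow> real) \<Rightarrow> 'x \<Rightarrow> real" where
  "mix e p q x = (1 - e) * p x + e * q x"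

definition entropy :: "('x::finite \<Rightarrow> real) \<Rightarrow> real" where
  "entropy r = - (\<Sum>x\<in>UNIV. r x * ln (r x))"

definition rel_entropy :: "('x::finite \<Rightarrow> real) \<Rightarrow> ('x \<Rightarrow> real) \<Rightarrow> real" where
  "rel_entropy r s = (\<Sum>x\<in>UNIV. r x * ln (r x / s x))"

definition cond_value :: "('b::finite \<Rightarrow> 'b \<Rightarrow> 'a::finite \<Rightarrow> real) \<Rightarrow> ('b \<Rightarrow> real) \<Rightarrow> 'b \<Rightarrow> 'a \<Rightarrow> real" where
  "cond_value P W bprev a = (\<Sum>b0\<in>UNIV. (ln (P b0 bprev a) + W b0) * P b0 bprev a)"

text \<open>Under this condition no logarithm in \<open>input_term P W bprev q a\<close> is taken of a junk
  quotient \<open>x / 0\<close>.\<close>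
definition outputs_covered :: "('b::finite \<Rightarrow> 'b \<Rightarrow> 'a::finite \<Rightarrow> real) \<Rightarrow> 'b \<Rightarrow> ('a \<Rightarrow> real) \<Rightarrow> 'a \<Rightarrow> bool" where
  "outputs_covered P bprev q a \<longleftrightarrow> (\<forall>b0. 0 < P b0 bprev a \<longrightarrow> 0 < Ppi P bprev q b0)"

lemma is_dist_nonneg: "is_dist q \<Longrightarrow> 0 \<le> q x"
  by (simp add: is_dist_def)

lemma is_dist_sum: "is_dist q \<Longrightarrow> (\<Sum>x\<in>UNIV. q x) = 1"
  by (simp add: is_dist_def)

lemma is_dist_le_one: "is_dist q \<Longrightarrow> q x \<le> 1"
  unfolding is_dist_def by (metis finite UNIV_I member_le_sum)

lemma sum_times_mix:
  "(\<Sum>x\<in>A. g x * mix e p q x) = (1 - e) * (\<Sum>x\<in>A. g x * p x) + e * (\<Sum>x\<in>A. g x * q x)"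
proof -
  have "g x * mix e p q x = (1 - e) * (g x * p x) + e * (g x * q x)" for x
    by (simp add: mix_def algebra_simps)
  then show ?thesis by (simp add: sum.distrib sum_distrib_left)
qed

lemma is_dist_mix:
  assumes "is_dist p" "is_dist q" "0 \<le> e" "e \<le> 1"
  shows "is_dist (mix e p q)"
proof -
  have "(\<Sum>x\<in>UNIV. mix e p q x) = 1"
    using sum_times_mix[where g = "\<lambda>_. 1" and A = UNIV and e = e and p = p and q = q] assms
    by (simp add: is_dist_sum)
  moreover have "0 \<le> mix e p q x" for x
    using assms by (simp add: mix_def is_dist_nonneg)
  ultimately show ?thesis by (simp add: is_dist_def)
qed

lemma is_dist_indicator: "is_dist (indicator {a} :: 'x::finite \<Rightarrow> real)"
  by (simp add: is_dist_def indicator_def)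

lemma sum_times_indicator: "(\<Sum>x\<in>UNIV. g x * indicator {a} x) = (g a :: real)"
  for g :: "'x::finite \<Rightarrow> real"
  by (simp add: indicator_def)

lemma is_dist_sum_le:
  "is_dist p \<Longrightarrow> (\<And>x. f x \<le> v) \<Longrightarrow> (\<Sum>x\<in>UNIV. f x * p x) \<le> v"
  using sum_mono[of UNIV "\<lambda>x. f x * p x" "\<lambda>x. v * p x"]
  by (simp add: mult_right_mono is_dist_nonneg sum_distrib_left[symmetric] is_dist_sum)

lemma is_dist_sum_eq:
  "is_dist p \<Longrightarrow> (\<And>x. p x \<noteq> 0 \<Longrightarrow> f x = v) \<Longrightarrow> (\<Sum>x\<in>UNIV. f x * p x) = v"
  using sum.cong[of UNIV UNIV "\<lambda>x. f x * p x" "\<lambda>x. v * p x"]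
  by (metis (mono_tags, lifting) is_dist_sum mult_cancel_right sum_distrib_left mult_1_right)

lemma is_dist_sum_eq_max:
  assumes "is_dist p" "\<And>x. f x \<le> v" "(\<Sum>x\<in>UNIV. f x * p x) = v" "p x \<noteq> 0"
  shows "f x = v"
proof -
  have "(\<Sum>x\<in>UNIV. (v - f x) * p x) = 0"
    using assms(1,3) by (simp add: left_diff_distrib sum_subtractf sum_distrib_left[symmetric] is_dist_sum)
  then have "(v - f x) * p x = 0"
    by (subst (asm) sum_nonneg_eq_0_iff) (auto simp: assms(2) is_dist_nonneg[OF assms(1)])
  then show ?thesis using assms(4) by simp
qed

lemma UMCO_channel_nonneg: "UMCO_channel P \<Longrightarrow> 0 \<le> P b0 bprev a"
  by (simp add: UMCO_channel_def is_dist_def)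

lemma UMCO_channel_sum: "UMCO_channel P \<Longrightarrow> (\<Sum>b0\<in>UNIV. P b0 bprev a) = 1"
  by (simp add: UMCO_channel_def is_dist_def)

lemma Ppi_ge: "UMCO_channel P \<Longrightarrow> is_dist q \<Longrightarrow> P b0 bprev a * q a \<le> Ppi P bprev q b0"
  unfolding Ppi_def
  by (rule member_le_sum) (auto intro: mult_nonneg_nonneg UMCO_channel_nonneg is_dist_nonneg)

lemma outputs_covered_if_nonzero:
  assumes "UMCO_channel P" "is_dist q" "q a \<noteq> 0"
  shows "outputs_covered P bprev q a"
  unfolding outputs_covered_def
proof (intro allI impI)
  fix b0 assume "0 < P b0 bprev a"
  moreover have "0 < q a" using assms(2,3) is_dist_nonneg[of q a] by simp
  ultimately show "0 < Ppi P bprev q b0"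
    using Ppi_ge[OF assms(1,2)] by (smt (verit) mult_pos_pos)
qed

lemma sum_Ppi_swap:
  "(\<Sum>a\<in>UNIV. (\<Sum>b0\<in>UNIV. P b0 bprev a * g b0) * q a) = (\<Sum>b0\<in>UNIV. Ppi P bprev q b0 * g b0)"
  unfolding Ppi_def sum_distrib_right by (subst sum.swap) (simp add: algebra_simps)

lemma is_dist_Ppi:
  assumes "UMCO_channel P" "is_dist q"
  shows "is_dist (Ppi P bprev q)"
proof -
  have "(\<Sum>b0\<in>UNIV. Ppi P bprev q b0) = 1"
    using sum_Ppi_swap[of P bprev "\<lambda>_. 1" q] assms by (simp add: UMCO_channel_sum is_dist_sum)
  moreover have "0 \<le> Ppi P bprev q b0" for b0
    using assms unfolding Ppi_def by (auto intro!: sum_nonneg simp: UMCO_channel_nonneg is_dist_nonneg)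
  ultimately show ?thesis by (simp add: is_dist_def)
qed

lemma Ppi_mix: "Ppi P bprev (mix e p q) = mix e (Ppi P bprev p) (Ppi P bprev q)"
  unfolding Ppi_def sum_times_mix by (simp add: mix_def fun_eq_iff)

lemma Ppi_indicator: "Ppi P bprev (indicator {a}) b0 = P b0 bprev a"
  by (simp add: Ppi_def sum_times_indicator)

lemma mult_ln_div_ge:
  fixes u m :: real
  assumes "0 \<le> u" "0 < m"
  shows "u - m \<le> u * ln (u / m)"
proof (cases "u = 0")
  case False
  then have "0 < u" using assms(1) by simp
  have "ln (m / u) \<le> m / u - 1" using \<open>0 < u\<close> assms(2) by (simp add: ln_le_minus_one)
  then have "u * ln (m / u) \<le> m - u" using \<open>0 < u\<close> by (simp add: field_simps mult_left_mono)
  then show ?thesis using \<open>0 < u\<close> assms(2) by (simp add: ln_div algebra_simps)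
qed (use assms in simp)

lemma mult_ln_div_le:
  fixes u m :: real
  assumes "0 \<le> u" "0 < m"
  shows "u * ln (u / m) \<le> (u - m) + (u - m)\<^sup>2 / m"
proof (cases "u = 0")
  case False
  then have "0 < u" using assms(1) by simp
  have "u * ln (u / m) \<le> u * (u / m - 1)"
    using \<open>0 < u\<close> assms(2) by (simp add: ln_le_minus_one mult_left_mono)
  also have "\<dots> = (u - m) + (u - m)\<^sup>2 / m" using assms(2) by (simp add: field_simps power2_eq_square)
  finally show ?thesis .
qed (use assms in \<open>simp add: power2_eq_square\<close>)

lemma mult_ln_convex:
  fixes x y t :: real
  assumes "0 \<le> x" "0 \<le> y" "0 \<le> t" "t \<le> 1"
  defines "z \<equiv> (1 - t) * x + t * y"
  shows "z * ln z \<le> (1 - t) * (x * ln x) + t * (y * ln y)"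
proof (cases "z = 0")
  case False
  moreover have "0 \<le> z" unfolding z_def using assms by (intro add_nonneg_nonneg mult_nonneg_nonneg) simp_all
  ultimately have "0 < z" by simp
  have split: "u * ln (u / z) = u * ln u - u * ln z" if "0 \<le> u" for u
    using that \<open>0 < z\<close> by (cases "u = 0") (simp_all add: ln_div algebra_simps)
  have "(1 - t) * (x - z) + t * (y - z) \<le> (1 - t) * (x * ln (x / z)) + t * (y * ln (y / z))"
    using mult_ln_div_ge[OF assms(1) \<open>0 < z\<close>] mult_ln_div_ge[OF assms(2) \<open>0 < z\<close>] assms(3,4)
    by (intro add_mono mult_left_mono) simp_all
  moreover have "(1 - t) * (x - z) + t * (y - z) = 0" by (simp add: z_def algebra_simps)
  moreover have "(1 - t) * (x * ln z) + t * (y * ln z) = z * ln z"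
    by (simp add: z_def distrib_right mult.assoc)
  moreover have "(1 - t) * (x * ln (x / z)) + t * (y * ln (y / z))
      = ((1 - t) * (x * ln x) + t * (y * ln y)) - ((1 - t) * (x * ln z) + t * (y * ln z))"
    unfolding split[OF assms(1)] split[OF assms(2)] by (simp add: right_diff_distrib)
  ultimately show ?thesis by linarith
next
  case True
  moreover have "0 \<le> (1 - t) * x" "0 \<le> t * y" using assms by simp_all
  ultimately have "(1 - t) * x = 0" "t * y = 0" unfolding z_def by linarith+
  then have "(1 - t) * (x * ln x) = 0" "t * (y * ln y) = 0"
    by (metis mult.assoc mult_zero_left)+
  then show ?thesis using True by (simp only: mult_zero_left add_0)
qed

lemma rel_entropy_nonneg:
  assumes "is_dist r" "is_dist s" "\<And>x. s x = 0 \<Longrightarrow> r x = 0"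
  shows "0 \<le> rel_entropy r s"
proof -
  have "r x - s x \<le> r x * ln (r x / s x)" for x
  proof (cases "s x = 0")
    case False
    then show ?thesis
      using mult_ln_div_ge[of "r x" "s x"] assms(1,2) by (simp add: is_dist_nonneg less_le)
  qed (simp add: assms(3))
  then have "(\<Sum>x\<in>UNIV. r x - s x) \<le> rel_entropy r s"
    unfolding rel_entropy_def by (rule sum_mono)
  then show ?thesis using assms(1,2) by (simp add: sum_subtractf is_dist_sum)
qed

lemma rel_entropy_le_chi_square:
  assumes "is_dist r" "is_dist s" "\<And>x. s x = 0 \<Longrightarrow> r x = 0"
  shows "rel_entropy r s \<le> (\<Sum>x\<in>UNIV. (r x - s x)\<^sup>2 / s x)"
proof -
  have "r x * ln (r x / s x) \<le> (r x - s x) + (r x - s x)\<^sup>2 / s x" for x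
  proof (cases "s x = 0")
    case False
    then show ?thesis
      using mult_ln_div_le[of "r x" "s x"] assms(1,2) by (simp add: is_dist_nonneg less_le)
  qed (simp add: assms(3))
  then have "rel_entropy r s \<le> (\<Sum>x\<in>UNIV. (r x - s x) + (r x - s x)\<^sup>2 / s x)"
    unfolding rel_entropy_def by (rule sum_mono)
  then show ?thesis using assms(1,2) by (simp add: sum.distrib sum_subtractf is_dist_sum)
qed

lemma entropy_le_card: "(\<And>x. 0 \<le> r x) \<Longrightarrow> entropy r \<le> CARD('x)"
  for r :: "'x::finite \<Rightarrow> real"
proof -
  assume nonneg: "\<And>x. 0 \<le> r x"
  have "- (r x * ln (r x)) \<le> 1" for x
    using mult_ln_div_ge[OF nonneg[of x] zero_less_one] nonneg[of x] by simp
  then show ?thesis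
    unfolding entropy_def using sum_mono[of UNIV "\<lambda>x. - (r x * ln (r x))" "\<lambda>_. 1"]
    by (simp add: sum_negf)
qed

lemma entropy_mix_ge:
  fixes r s :: "'x::finite \<Rightarrow> real"
  assumes "\<And>x. 0 \<le> r x" "\<And>x. 0 \<le> s x" "r x1 = 0" "0 < e" "e < 1"
  shows "(1 - e) * entropy r + e * entropy s - e * s x1 * ln e \<le> entropy (mix e r s)"
proof -
  have "mix e r s x * ln (mix e r s x)
      \<le> (1 - e) * (r x * ln (r x)) + e * (s x * ln (s x)) + (if x = x1 then e * s x1 * ln e else 0)" for x
  proof (cases "x = x1")
    case True
    then show ?thesis
      using assms(2-4) by (cases "s x1 = 0") (simp_all add: mix_def ln_mult less_le algebra_simps)
  next
    case False
    then show ?thesis using mult_ln_convex[OF assms(1,2), of e x x] assms(4,5) by (simp add: mix_def)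
  qed
  then have "(\<Sum>x\<in>UNIV. mix e r s x * ln (mix e r s x))
      \<le> (\<Sum>x\<in>UNIV. (1 - e) * (r x * ln (r x)) + e * (s x * ln (s x)) + (if x = x1 then e * s x1 * ln e else 0))"
    by (rule sum_mono)
  then show ?thesis
    by (simp add: entropy_def sum.distrib sum_distrib_left)
qed

lemma stage_obj_eq_entropy:
  assumes "UMCO_channel P" "is_dist q"
  shows "stage_obj P W bprev q
    = (\<Sum>a\<in>UNIV. cond_value P W bprev a * q a) + entropy (Ppi P bprev q)"
proof -
  have "(ln (P b0 bprev a / Ppi P bprev q b0) + W b0) * P b0 bprev a * q a
      = (ln (P b0 bprev a) + W b0) * P b0 bprev a * q a - P b0 bprev a * ln (Ppi P bprev q b0) * q a"
    for a b0
  proof (cases "P b0 bprev a = 0 \<or> q a = 0")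
    case False
    then have "0 < P b0 bprev a" "0 < q a"
      using assms UMCO_channel_nonneg is_dist_nonneg by (metis less_le)+
    then have "0 < Ppi P bprev q b0"
      using Ppi_ge[OF assms, of b0 bprev a] by (smt (verit) mult_pos_pos)
    with \<open>0 < P b0 bprev a\<close> show ?thesis by (simp add: ln_div algebra_simps)
  qed auto
  then have "stage_obj P W bprev q = (\<Sum>a\<in>UNIV. cond_value P W bprev a * q a)
      - (\<Sum>a\<in>UNIV. (\<Sum>b0\<in>UNIV. P b0 bprev a * ln (Ppi P bprev q b0)) * q a)"
    unfolding stage_obj_def input_term_def cond_value_def sum_distrib_right
    by (simp add: sum_subtractf)
  also have "(\<Sum>a\<in>UNIV. (\<Sum>b0\<in>UNIV. P b0 bprev a * ln (Ppi P bprev q b0)) * q a)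
      = (\<Sum>b0\<in>UNIV. Ppi P bprev q b0 * ln (Ppi P bprev q b0))"
    by (rule sum_Ppi_swap)
  finally show ?thesis by (simp add: entropy_def)
qed

lemma stage_obj_le_bound:
  fixes P :: "'b::finite \<Rightarrow> 'b \<Rightarrow> 'a::finite \<Rightarrow> real"
  assumes "UMCO_channel P" "is_dist q"
  shows "stage_obj P W bprev q \<le> (\<Sum>a\<in>UNIV. \<bar>cond_value P W bprev a\<bar>) + CARD('b)"
proof -
  have "cond_value P W bprev a * q a \<le> \<bar>cond_value P W bprev a\<bar> * q a" for a
    by (rule mult_right_mono) (simp_all add: is_dist_nonneg[OF assms(2)])
  also have "\<bar>cond_value P W bprev a\<bar> * q a \<le> \<bar>cond_value P W bprev a\<bar>" for a
    by (simp add: mult_left_le is_dist_le_one[OF assms(2)])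
  finally have "cond_value P W bprev a * q a \<le> \<bar>cond_value P W bprev a\<bar>" for a .
  then have "(\<Sum>a\<in>UNIV. cond_value P W bprev a * q a) \<le> (\<Sum>a\<in>UNIV. \<bar>cond_value P W bprev a\<bar>)"
    by (rule sum_mono)
  moreover have "entropy (Ppi P bprev q) \<le> CARD('b)"
    using is_dist_Ppi[OF assms] by (simp add: entropy_le_card is_dist_nonneg)
  ultimately show ?thesis using stage_obj_eq_entropy[OF assms] by simp
qed

lemma stage_obj_le_dp_sup:
  assumes "UMCO_channel P" "is_dist q"
  shows "stage_obj P W bprev q \<le> dp_sup P W bprev"
  unfolding dp_sup_def
  by (rule cSUP_upper) (use assms stage_obj_le_bound[OF assms(1)] in \<open>auto intro!: bdd_aboveI2\<close>)

lemma dp_sup_eq_max: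
  assumes "is_dist p" "\<And>q. is_dist q \<Longrightarrow> stage_obj P W bprev q \<le> stage_obj P W bprev p"
  shows "dp_sup P W bprev = stage_obj P W bprev p"
  unfolding dp_sup_def by (rule cSup_eq_maximum) (use assms in auto)

lemma stage_obj_mix_ge:
  assumes "UMCO_channel P" "is_dist p" "is_dist q" "0 < e" "e < 1" "Ppi P bprev p b1 = 0"
  shows "(1 - e) * stage_obj P W bprev p + e * stage_obj P W bprev q - e * Ppi P bprev q b1 * ln e
    \<le> stage_obj P W bprev (mix e p q)"
proof -
  have "(1 - e) * entropy (Ppi P bprev p) + e * entropy (Ppi P bprev q) - e * Ppi P bprev q b1 * ln e
      \<le> entropy (Ppi P bprev (mix e p q))"
    unfolding Ppi_mix using assms
    by (intro entropy_mix_ge) (simp_all add: is_dist_nonneg is_dist_Ppi)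
  moreover have "is_dist (mix e p q)" using assms by (simp add: is_dist_mix)
  ultimately show ?thesis
    using assms(1-3) by (simp add: stage_obj_eq_entropy sum_times_mix) argo
qed

lemma Ppi_eq_zero_if_covered:
  assumes "UMCO_channel P" "\<And>a. q a \<noteq> 0 \<Longrightarrow> outputs_covered P bprev p a" "Ppi P bprev p b0 = 0"
  shows "Ppi P bprev q b0 = 0"
proof -
  have "P b0 bprev a * q a = 0" for a
    using assms UMCO_channel_nonneg[OF assms(1), of b0 bprev a]
    by (cases "q a = 0") (auto simp: outputs_covered_def less_le)
  then show ?thesis unfolding Ppi_def by (simp add: sum.neutral)
qed

lemma stage_obj_eq_rel_entropy:
  assumes "UMCO_channel P" "is_dist q" "\<And>a. q a \<noteq> 0 \<Longrightarrow> outputs_covered P bprev p a"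
  shows "stage_obj P W bprev q = (\<Sum>a\<in>UNIV. input_term P W bprev p a * q a)
    - rel_entropy (Ppi P bprev q) (Ppi P bprev p)"
proof -
  have "(ln (P b0 bprev a / Ppi P bprev q b0) + W b0) * P b0 bprev a * q a
      = (ln (P b0 bprev a / Ppi P bprev p b0) + W b0) * P b0 bprev a * q a
        - P b0 bprev a * ln (Ppi P bprev q b0 / Ppi P bprev p b0) * q a"
    for a b0
  proof (cases "P b0 bprev a = 0 \<or> q a = 0")
    case False
    then have "0 < P b0 bprev a" "0 < q a"
      using assms(1,2) UMCO_channel_nonneg is_dist_nonneg by (metis less_le)+
    moreover from this have "0 < Ppi P bprev q b0"
      using Ppi_ge[OF assms(1,2), of b0 bprev a] by (smt (verit) mult_pos_pos)
    moreover have "0 < Ppi P bprev p b0"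
      using assms(3) False \<open>0 < P b0 bprev a\<close> by (simp add: outputs_covered_def)
    ultimately show ?thesis by (simp add: ln_div algebra_simps)
  qed auto
  then have "stage_obj P W bprev q = (\<Sum>a\<in>UNIV. input_term P W bprev p a * q a)
      - (\<Sum>a\<in>UNIV. (\<Sum>b0\<in>UNIV. P b0 bprev a * ln (Ppi P bprev q b0 / Ppi P bprev p b0)) * q a)"
    unfolding stage_obj_def input_term_def sum_distrib_right
    by (simp add: sum_subtractf)
  also have "(\<Sum>a\<in>UNIV. (\<Sum>b0\<in>UNIV. P b0 bprev a * ln (Ppi P bprev q b0 / Ppi P bprev p b0)) * q a)
      = rel_entropy (Ppi P bprev q) (Ppi P bprev p)"
    unfolding rel_entropy_def by (rule sum_Ppi_swap)
  finally show ?thesis .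
qed

lemma stage_obj_le_if_input_term_le:
  assumes "UMCO_channel P" "is_dist p" "is_dist q"
    and "\<And>a. outputs_covered P bprev p a" "\<And>a. input_term P W bprev p a \<le> v"
  shows "stage_obj P W bprev q \<le> v"
proof -
  have "0 \<le> rel_entropy (Ppi P bprev q) (Ppi P bprev p)"
    using assms(1-3) Ppi_eq_zero_if_covered[OF assms(1) assms(4)]
    by (intro rel_entropy_nonneg) (simp_all add: is_dist_Ppi)
  moreover have "(\<Sum>a\<in>UNIV. input_term P W bprev p a * q a) \<le> v"
    using assms(3,5) by (rule is_dist_sum_le)
  ultimately show ?thesis
    using stage_obj_eq_rel_entropy[OF assms(1,3,4)] by simp
qed

text \<open>Mixing in weight \<open>e\<close> of the point mass at \<open>a\<close> gains \<open>-e P(b\<^sub>1|b,a) ln e\<close> of output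
  entropy at an uncovered output \<open>b\<^sub>1\<close>, which for small \<open>e\<close> beats the linear loss.\<close>
lemma optimal_imp_outputs_covered:
  assumes ch: "UMCO_channel P" and p: "is_dist p"
    and opt: "\<And>q. is_dist q \<Longrightarrow> stage_obj P W bprev q \<le> stage_obj P W bprev p"
  shows "outputs_covered P bprev p a"
  unfolding outputs_covered_def
proof (intro allI impI)
  fix b1 assume s: "0 < P b1 bprev a"
  show "0 < Ppi P bprev p b1"
  proof (rule ccontr)
    assume "\<not> 0 < Ppi P bprev p b1"
    then have r: "Ppi P bprev p b1 = 0"
      using is_dist_nonneg[OF is_dist_Ppi[OF ch p], of bprev b1] by simp
    define G where "G = stage_obj P W bprev (indicator {a}) - stage_obj P W bprev p"
    define e where "e = exp (- (\<bar>G\<bar> / P b1 bprev a + 1))"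
    have "0 \<le> \<bar>G\<bar> / P b1 bprev a" using s by simp
    then have "0 < e" "e < 1" by (simp_all add: e_def)
    have ln_e: "P b1 bprev a * ln e = - (\<bar>G\<bar> + P b1 bprev a)"
      using s by (simp add: e_def field_simps)
    have "(1 - e) * stage_obj P W bprev p + e * stage_obj P W bprev (indicator {a})
        - e * P b1 bprev a * ln e \<le> stage_obj P W bprev (mix e p (indicator {a}))"
      using stage_obj_mix_ge[OF ch p is_dist_indicator \<open>0 < e\<close> \<open>e < 1\<close> r] by (simp add: Ppi_indicator)
    also have "\<dots> \<le> stage_obj P W bprev p"
      using \<open>0 < e\<close> \<open>e < 1\<close> by (intro opt is_dist_mix p is_dist_indicator) simp_all
    finally have "e * (G - P b1 bprev a * ln e) \<le> 0"
      by (simp add: G_def algebra_simps)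
    moreover have "0 < G - P b1 bprev a * ln e"
      using ln_e s by simp
    ultimately show False using \<open>0 < e\<close> by (simp add: mult_le_0_iff)
  qed
qed

lemma nonpos_if_le_scaled:
  fixes d C :: real
  assumes "\<And>e. 0 < e \<Longrightarrow> e \<le> 1 \<Longrightarrow> d \<le> e * C"
  shows "d \<le> 0"
proof (rule ccontr)
  assume "\<not> d \<le> 0"
  then have "0 < d" by simp
  define e where "e = d / (d + \<bar>C\<bar> + 1)"
  have "0 < e" "e \<le> 1" using \<open>0 < d\<close> by (simp_all add: e_def)
  moreover have "e * C < d"
  proof -
    have "e * C \<le> e * \<bar>C\<bar>" using \<open>0 < e\<close> by (simp add: mult_left_mono)
    also have "\<dots> < d" using \<open>0 < d\<close> by (simp add: e_def field_simps) (smt (verit) mult_pos_pos)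
    finally show ?thesis .
  qed
  ultimately show False using assms by (meson not_le)
qed

lemma optimal_imp_input_term_le:
  assumes ch: "UMCO_channel P" and p: "is_dist p"
    and opt: "\<And>q. is_dist q \<Longrightarrow> stage_obj P W bprev q \<le> stage_obj P W bprev p"
  shows "input_term P W bprev p a \<le> stage_obj P W bprev p"
proof -
  define r where "r = Ppi P bprev p"
  define s where "s = Ppi P bprev (indicator {a})"
  define C where "C = (\<Sum>b0\<in>UNIV. (s b0 - r b0)\<^sup>2 / r b0)"
  have "input_term P W bprev p a - stage_obj P W bprev p \<le> e * C" if "0 < e" "e \<le> 1" for e
  proof -
    define q where "q = mix e p (indicator {a})"
    have q: "is_dist q" using that by (simp add: q_def is_dist_mix p is_dist_indicator)
    have cov: "outputs_covered P bprev p a'" if "q a' \<noteq> 0" for a'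
    proof (cases "a' = a")
      case False
      then have "p a' \<noteq> 0" using \<open>q a' \<noteq> 0\<close> by (simp add: q_def mix_def)
      then show ?thesis by (rule outputs_covered_if_nonzero[OF ch p])
    qed (use optimal_imp_outputs_covered[OF ch p opt] in simp)
    have "rel_entropy (Ppi P bprev q) r \<le> (\<Sum>b0\<in>UNIV. (Ppi P bprev q b0 - r b0)\<^sup>2 / r b0)"
      using Ppi_eq_zero_if_covered[OF ch cov] unfolding r_def
      by (intro rel_entropy_le_chi_square is_dist_Ppi ch q p)
    also have "\<dots> = e\<^sup>2 * C"
      by (simp add: C_def q_def Ppi_mix s_def r_def mix_def sum_distrib_left power2_eq_square algebra_simps)
    finally have "rel_entropy (Ppi P bprev q) r \<le> e\<^sup>2 * C" .
    moreover have "stage_obj P W bprev q = (1 - e) * stage_obj P W bprev p + e * input_term P W bprev p a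
        - rel_entropy (Ppi P bprev q) r"
      using stage_obj_eq_rel_entropy[OF ch q cov]
      by (simp add: q_def r_def sum_times_mix sum_times_indicator stage_obj_def)
    moreover have "stage_obj P W bprev q \<le> stage_obj P W bprev p" using q by (rule opt)
    ultimately have "e * (input_term P W bprev p a - stage_obj P W bprev p) \<le> e * (e * C)"
      by (simp add: power2_eq_square algebra_simps)
    then show ?thesis using \<open>0 < e\<close> by simp
  qed
  then have "input_term P W bprev p a - stage_obj P W bprev p \<le> 0"
    by (rule nonpos_if_le_scaled)
  then show ?thesis by simp
qed

lemma optimal_imp_KKT:
  assumes "UMCO_channel P" "is_dist p"
    and "\<And>q. is_dist q \<Longrightarrow> stage_obj P W bprev q \<le> stage_obj P W bprev p"
  shows "outputs_covered P bprev p a" "input_term P W bprev p a \<le> stage_obj P W bprev p"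
    and "p a \<noteq> 0 \<Longrightarrow> input_term P W bprev p a = stage_obj P W bprev p"
proof -
  show "outputs_covered P bprev p a" using assms by (rule optimal_imp_outputs_covered)
  have le: "input_term P W bprev p a' \<le> stage_obj P W bprev p" for a'
    using assms by (rule optimal_imp_input_term_le)
  then show "input_term P W bprev p a \<le> stage_obj P W bprev p" .
  show "p a \<noteq> 0 \<Longrightarrow> input_term P W bprev p a = stage_obj P W bprev p"
    by (rule is_dist_sum_eq_max[OF assms(2) le]) (simp add: stage_obj_def)
qed

lemma KKT_imp_optimal:
  assumes "UMCO_channel P" "is_dist p" "\<And>a. outputs_covered P bprev p a"
    and "\<And>a. input_term P W bprev p a \<le> v" "\<And>a. p a \<noteq> 0 \<Longrightarrow> input_term P W bprev p a = v"
  shows "stage_obj P W bprev p = v" "dp_sup P W bprev = v"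
proof -
  show "stage_obj P W bprev p = v"
    unfolding stage_obj_def using assms(2,5) by (rule is_dist_sum_eq)
  moreover have "dp_sup P W bprev = stage_obj P W bprev p"
    using assms stage_obj_le_if_input_term_le[OF assms(1,2) _ assms(3,4)] calculation
    by (intro dp_sup_eq_max) simp_all
  ultimately show "dp_sup P W bprev = v" by simp
qed

theorem mainTheorem7:
  fixes P :: "'b::finite \<Rightarrow> 'b \<Rightarrow> 'a::finite \<Rightarrow> real"
    and V :: "'b \<Rightarrow> real" and J :: real
    and pol :: "'b \<Rightarrow> 'a \<Rightarrow> real"
  assumes channel: "UMCO_channel P"
    and lim: "\<forall>b. (\<lambda>t. Vt P t b - real t * J) \<longlonglongrightarrow> V b"
    and dp: "DP_eq P J V"
    and pi_dist: "\<forall>b. is_dist (pol b)"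
  shows "(achieves_sup P V pol \<longrightarrow> KKT_cond P J V pol) \<and>
         (\<forall>W. KKT_cond P J W pol \<longrightarrow> achieves_sup P W pol \<and> DP_eq P J W)"
proof (intro conjI impI allI)
  assume "achieves_sup P V pol"
  then have optimum: "stage_obj P V b (pol b) = J + V b" and
    opt: "\<And>q. is_dist q \<Longrightarrow> stage_obj P V b q \<le> stage_obj P V b (pol b)" for b
    using dp stage_obj_le_dp_sup[OF channel] by (auto simp: achieves_sup_def DP_eq_def)
  show "KKT_cond P J V pol"
    using optimal_imp_KKT[OF channel _ opt] pi_dist
    unfolding KKT_cond_def outputs_covered_def optimum by auto
next
  fix W assume KKT: "KKT_cond P J W pol"
  have "stage_obj P W b (pol b) = J + W b \<and> dp_sup P W b = J + W b" for b
  proof -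
    have "outputs_covered P b (pol b) a" for a
      using KKT outputs_covered_if_nonzero[OF channel] pi_dist
      by (cases "pol b a = 0") (auto simp: KKT_cond_def outputs_covered_def)
    moreover have "input_term P W b (pol b) a \<le> J + W b" for a
      using KKT by (cases "pol b a = 0") (auto simp: KKT_cond_def)
    moreover have "pol b a \<noteq> 0 \<Longrightarrow> input_term P W b (pol b) a = J + W b" for a
      using KKT by (simp add: KKT_cond_def)
    ultimately show ?thesis using KKT_imp_optimal[OF channel] pi_dist by blast
  qed
  then show "achieves_sup P W pol" "DP_eq P J W"
    using pi_dist by (auto simp: achieves_sup_def DP_eq_def)
qed

end
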